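(* If $m$ is a power of two with $m\geq 4$, then $\mathcal{G}^4_{n,m}$ is transmission irregular for every odd positive integer $n$ such that $n+2$ does not divide $m+2$.
   Context: Let $G_4$ be the (disconnected) graph with vertices $a,b,c,d,e,f$ and edges $ab,ac,bc,de,ef$. For positive integers $n,m$, $\mathcal{G}^4_{n,m}$ is obtained from $G_4$ by adding three new paths with new internal vertices: a path from $b$ to $d$ with $n$ internal vertices, a path from $c$ to $e$ with $n$ internal vertices, and a path from $d$ to $e$ with $m$ internal vertices (a path with $s$ internal vertices has length $s+1$). The transmission of a vertex $u$ in a connected graph $G$ is $Tr_G(u)=\sum_{v}d_G(u,v)$; a graph is transmission irregular if no two of its vertices have equal transmission. *)

theory Defs
  imports Main
begin

definition has_walk :: "'a set \<Rightarrow> ('a \<Rightarrow> 'a \<Rightarrow> bool) \<Rightarrow> 'a \<Rightarrow> 'a \<Rightarrow> nat \<Rightarrow> bool" where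
  "has_walk V adj u v k \<longleftrightarrow>
     (\<exists>xs. length xs = Suc k \<and> set xs \<subseteq> V \<and> hd xs = u \<and> last xs = v \<and>
           (\<forall>i<k. adj (xs ! i) (xs ! Suc i)))"

text \<open>Distance: length of a shortest walk (used only for connected graphs).\<close>
definition gdist :: "'a set \<Rightarrow> ('a \<Rightarrow> 'a \<Rightarrow> bool) \<Rightarrow> 'a \<Rightarrow> 'a \<Rightarrow> nat" where
  "gdist V adj u v = (LEAST k. has_walk V adj u v k)"

definition connected_graph :: "'a set \<Rightarrow> ('a \<Rightarrow> 'a \<Rightarrow> bool) \<Rightarrow> bool" where
  "connected_graph V adj \<longleftrightarrow> (\<forall>u\<in>V. \<forall>v\<in>V. \<exists>k. has_walk V adj u v k)"

definition transmission :: "'a set \<Rightarrow> ('a \<Rightarrow> 'a \<Rightarrow> bool) \<Rightarrow> 'a \<Rightarrow> nat" where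
  "transmission V adj u = (\<Sum>v\<in>V. gdist V adj u v)"

definition transmission_irregular :: "'a set \<Rightarrow> ('a \<Rightarrow> 'a \<Rightarrow> bool) \<Rightarrow> bool" where
  "transmission_irregular V adj \<longleftrightarrow> inj_on (transmission V adj) V"

text \<open>Vertices a..f of G_4, and internal vertices P1 i (path b--d), P2 i (path c--e),
  P3 i (path d--e), indexed from 1.\<close>
datatype vtx = VA | VB | VC | VD | VE | VF | P1 nat | P2 nat | P3 nat

definition G4_verts :: "nat \<Rightarrow> nat \<Rightarrow> vtx set" where
  "G4_verts n m = {VA, VB, VC, VD, VE, VF} \<union> P1 ` {1..n} \<union> P2 ` {1..n} \<union> P3 ` {1..m}"

definition path_edge :: "vtx \<Rightarrow> vtx \<Rightarrow> (nat \<Rightarrow> vtx) \<Rightarrow> nat \<Rightarrow> vtx \<Rightarrow> vtx \<Rightarrow> bool" where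
  "path_edge s t p k x y \<longleftrightarrow>
     (x = s \<and> y = p 1) \<or> (\<exists>i. 1 \<le> i \<and> i < k \<and> x = p i \<and> y = p (Suc i)) \<or> (x = p k \<and> y = t)"

definition G4_dir_edge :: "nat \<Rightarrow> nat \<Rightarrow> vtx \<Rightarrow> vtx \<Rightarrow> bool" where
  "G4_dir_edge n m x y \<longleftrightarrow>
     (x, y) \<in> {(VA, VB), (VA, VC), (VB, VC), (VD, VE), (VE, VF)} \<or>
     path_edge VB VD P1 n x y \<or> path_edge VC VE P2 n x y \<or> path_edge VD VE P3 m x y"

definition G4_adj :: "nat \<Rightarrow> nat \<Rightarrow> vtx \<Rightarrow> vtx \<Rightarrow> bool" where
  "G4_adj n m x y \<longleftrightarrow> G4_dir_edge n m x y \<or> G4_dir_edge n m y x"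

end

theory Submission
  imports Defs
begin

(* Write N = n + 1 and m = 2t. Every vertex gets coordinates (its distance from d or e along the
   two long paths, or its index on the d-e path), in which all distances have closed forms; these
   are certified as graph distances because they change by at most 1 along edges and every vertex
   other than the source has a neighbour one step closer to it. Summing over the two even cycles
   through d and e gives every transmission as a common constant plus an even excess, minus 1
   exactly for the vertices nearer to e than to d (the path from e to c, the half of the d-e path
   next to e, and f). Equal transmissions therefore force the same side and the same excess. On
   each side the excesses are 2th (h <= N), 2(N+1)k (1 <= k <= t) and one value for a resp. f;
   these are pairwise distinct since t is a power of two, N+1 is odd and N+1 does not divide t+1. *)

lemma has_walk_snoc:
  assumes "has_walk V adj u w k" "adj w v" "v \<in> V"
  shows "has_walk V adj u v (Suc k)"
proof -
  obtain xs where xs: "length xs = Suc k" "set xs \<subseteq> V" "hd xs = u" "last xs = w"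
    "\<forall>i<k. adj (xs ! i) (xs ! Suc i)"
    using assms(1) unfolding has_walk_def by blast
  have "xs \<noteq> []" using xs(1) by auto
  then have "xs ! k = w" using xs(1,4) by (simp add: last_conv_nth)
  show ?thesis unfolding has_walk_def
  proof (intro exI[of _ "xs @ [v]"] conjI allI impI)
    fix i assume "i < Suc k"
    then consider "i < k" | "i = k" by linarith
    then show "adj ((xs @ [v]) ! i) ((xs @ [v]) ! Suc i)"
      by cases (use xs \<open>xs ! k = w\<close> assms(2) in \<open>simp_all add: nth_append\<close>)
  qed (use xs \<open>xs \<noteq> []\<close> assms(3) in auto)
qed

lemma has_walk_le_potential:
  assumes "has_walk V adj u v k" "D u = 0"
    and "\<And>x y. x \<in> V \<Longrightarrow> y \<in> V \<Longrightarrow> adj x y \<Longrightarrow> D y \<le> D x + 1"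
  shows "D v \<le> k"
proof -
  obtain xs where xs: "length xs = Suc k" "set xs \<subseteq> V" "hd xs = u" "last xs = v"
    "\<forall>i<k. adj (xs ! i) (xs ! Suc i)"
    using assms(1) unfolding has_walk_def by blast
  have "D (xs ! i) \<le> i" if "i \<le> k" for i
    using that
  proof (induction i)
    case 0
    have "xs \<noteq> []" using xs(1) by auto
    then have "xs ! 0 = u" using xs(3) by (simp add: hd_conv_nth)
    then show ?case using assms(2) by simp
  next
    case (Suc i)
    have "xs ! i \<in> V" "xs ! Suc i \<in> V" using Suc.prems xs(1,2) by (auto simp: subset_iff)
    then have "D (xs ! Suc i) \<le> D (xs ! i) + 1" using assms(3) xs(5) Suc.prems by auto
    then show ?case using Suc by simp
  qed
  then have "D (xs ! k) \<le> k" by simp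
  moreover have "xs ! k = v"
    using xs(1,4) by (simp add: last_conv_nth flip: length_greater_0_conv)
  ultimately show ?thesis by simp
qed

lemma has_walk_potential:
  assumes "u \<in> V" "D u = 0"
    and "\<And>v. v \<in> V \<Longrightarrow> v \<noteq> u \<Longrightarrow> \<exists>w\<in>V. adj w v \<and> D w + 1 = D v"
    and "v \<in> V"
  shows "has_walk V adj u v (D v)"
  using assms(4)
proof (induction "D v" arbitrary: v)
  case 0
  have "v = u"
  proof (rule ccontr)
    assume "v \<noteq> u"
    then obtain w where "D w + 1 = D v" using assms(3) 0 by blast
    then show False using 0 by simp
  qed
  then show ?case unfolding has_walk_def using assms(1,2) by (intro exI[of _ "[u]"]) auto
next
  case (Suc k)
  then have "v \<noteq> u" using assms(2) by auto
  then obtain w where w: "w \<in> V" "adj w v" "D w + 1 = D v" using assms(3) Suc.prems by blast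
  then have "has_walk V adj u w (D w)" using Suc by simp
  from has_walk_snoc[OF this w(2) Suc.prems] show ?case using w(3) by simp
qed

lemma gdist_eq_potential:
  assumes "u \<in> V" "D u = 0"
    and "\<And>x y. x \<in> V \<Longrightarrow> y \<in> V \<Longrightarrow> adj x y \<Longrightarrow> D y \<le> D x + 1"
    and "\<And>v. v \<in> V \<Longrightarrow> v \<noteq> u \<Longrightarrow> \<exists>w\<in>V. adj w v \<and> D w + 1 = D v"
    and "v \<in> V"
  shows "gdist V adj u v = D v"
  unfolding gdist_def
proof (rule Least_equality)
  show "has_walk V adj u v (D v)" using has_walk_potential[OF assms(1,2,4,5)] .
  show "D v \<le> k" if "has_walk V adj u v k" for k
    using has_walk_le_potential that assms(2,3) .
qed

(* Coordinates on G^4_{n,m} with N = n + 1: PD h and PE h are the vertices at distance h from d,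
   resp. e, on the path towards b, resp. c (so PD N = b and PE N = c), PQ j is the j-th internal
   vertex P3 j of the d-e path, and PA = a, PF = f. *)
datatype pos = PD nat | PE nat | PQ nat | PA | PF

fun pos_valid :: "nat \<Rightarrow> nat \<Rightarrow> pos \<Rightarrow> bool" where
  "pos_valid N m (PD h) \<longleftrightarrow> h \<le> N"
| "pos_valid N m (PE h) \<longleftrightarrow> h \<le> N"
| "pos_valid N m (PQ j) \<longleftrightarrow> 1 \<le> j \<and> j \<le> m"
| "pos_valid N m PA \<longleftrightarrow> True"
| "pos_valid N m PF \<longleftrightarrow> True"

inductive pos_edge :: "nat \<Rightarrow> nat \<Rightarrow> pos \<Rightarrow> pos \<Rightarrow> bool" for N m where
  D_step: "h < N \<Longrightarrow> pos_edge N m (PD h) (PD (Suc h))"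
| E_step: "h < N \<Longrightarrow> pos_edge N m (PE h) (PE (Suc h))"
| Q_step: "1 \<le> j \<Longrightarrow> j < m \<Longrightarrow> pos_edge N m (PQ j) (PQ (Suc j))"
| d_e: "pos_edge N m (PD 0) (PE 0)"
| d_Q: "pos_edge N m (PD 0) (PQ 1)"
| Q_e: "pos_edge N m (PQ m) (PE 0)"
| e_f: "pos_edge N m (PE 0) PF"
| b_c: "pos_edge N m (PD N) (PE N)"
| b_a: "pos_edge N m (PD N) PA"
| c_a: "pos_edge N m (PE N) PA"

definition pos_adj :: "nat \<Rightarrow> nat \<Rightarrow> pos \<Rightarrow> pos \<Rightarrow> bool" where
  "pos_adj N m p q \<longleftrightarrow> pos_edge N m p q \<or> pos_edge N m q p"

fun pos_dist :: "nat \<Rightarrow> nat \<Rightarrow> pos \<Rightarrow> pos \<Rightarrow> nat" where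
  "pos_dist N m (PD h) (PD k) = (h - k) + (k - h)"
| "pos_dist N m (PE h) (PE k) = (h - k) + (k - h)"
| "pos_dist N m (PD h) (PE k) = 1 + min (h + k) (2 * N - h - k)"
| "pos_dist N m (PE h) (PD k) = 1 + min (h + k) (2 * N - h - k)"
| "pos_dist N m (PD h) (PQ j) = h + min j (m + 2 - j)"
| "pos_dist N m (PQ j) (PD h) = h + min j (m + 2 - j)"
| "pos_dist N m (PE h) (PQ j) = h + min (j + 1) (m + 1 - j)"
| "pos_dist N m (PQ j) (PE h) = h + min (j + 1) (m + 1 - j)"
| "pos_dist N m (PQ j) (PQ k) = min ((j - k) + (k - j)) (m + 2 - ((j - k) + (k - j)))"
| "pos_dist N m PA (PD h) = N + 1 - h"
| "pos_dist N m (PD h) PA = N + 1 - h"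
| "pos_dist N m PA (PE h) = N + 1 - h"
| "pos_dist N m (PE h) PA = N + 1 - h"
| "pos_dist N m PA (PQ j) = N + 1 + min j (m + 1 - j)"
| "pos_dist N m (PQ j) PA = N + 1 + min j (m + 1 - j)"
| "pos_dist N m PA PF = N + 2"
| "pos_dist N m PF PA = N + 2"
| "pos_dist N m PA PA = 0"
| "pos_dist N m PF PF = 0"
| "pos_dist N m PF (PD h) = 2 + h"
| "pos_dist N m (PD h) PF = 2 + h"
| "pos_dist N m PF (PE h) = 1 + h"
| "pos_dist N m (PE h) PF = 1 + h"
| "pos_dist N m PF (PQ j) = 1 + min (j + 1) (m + 1 - j)"
| "pos_dist N m (PQ j) PF = 1 + min (j + 1) (m + 1 - j)"

lemma pos_dist_self [simp]: "pos_dist N m p p = 0"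
  by (cases p) auto

lemma pos_dist_edge:
  assumes "pos_valid N m s" "pos_edge N m p q"
  shows "pos_dist N m s q \<le> pos_dist N m s p + 1 \<and> pos_dist N m s p \<le> pos_dist N m s q + 1"
  using assms(2,1)
proof induction
  case (Q_step j)
  then show ?case
  proof (cases s)
    case (PQ a)
    then show ?thesis using Q_step by (cases "a \<le> j") (auto simp: min_def)
  qed (auto simp: min_def)
qed (cases s; auto simp: min_def)+

(* A neighbour of y one step closer to s, i.e. the predecessor of y on a shortest path from s
   (junk value s if y = s). *)
fun pos_pred :: "nat \<Rightarrow> nat \<Rightarrow> pos \<Rightarrow> pos \<Rightarrow> pos" where
  "pos_pred N m (PD a) (PD h) = (if a < h then PD (h - 1) else PD (h + 1))"
| "pos_pred N m (PD a) (PE h) = (if a + h \<le> N then (if 0 < h then PE (h - 1) else PD 0)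
                              else (if h < N then PE (h + 1) else PD N))"
| "pos_pred N m (PD a) (PQ j) = (if j \<le> m + 2 - j then (if j = 1 then PD 0 else PQ (j - 1))
                              else (if j = m then PE 0 else PQ (j + 1)))"
| "pos_pred N m (PD a) PA = PD N"
| "pos_pred N m (PD a) PF = PE 0"
| "pos_pred N m (PE a) (PE h) = (if a < h then PE (h - 1) else PE (h + 1))"
| "pos_pred N m (PE a) (PD h) = (if a + h \<le> N then (if 0 < h then PD (h - 1) else PE 0)
                              else (if h < N then PD (h + 1) else PE N))"
| "pos_pred N m (PE a) (PQ j) = (if j + 1 \<le> m + 1 - j then (if j = 1 then PD 0 else PQ (j - 1))
                              else (if j = m then PE 0 else PQ (j + 1)))"
| "pos_pred N m (PE a) PA = PE N"
| "pos_pred N m (PE a) PF = PE 0"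
| "pos_pred N m (PQ a) (PD h) = (if 0 < h then PD (h - 1) else if a \<le> m + 2 - a then PQ 1 else PE 0)"
| "pos_pred N m (PQ a) (PE h) = (if 0 < h then PE (h - 1) else if a + 1 \<le> m + 1 - a then PD 0 else PQ m)"
| "pos_pred N m (PQ a) (PQ j) = (if (a < j \<and> j - a \<le> m + 2 - (j - a)) then PQ (j - 1)
                              else if (j < a \<and> a - j \<le> m + 2 - (a - j)) then PQ (j + 1)
                              else if a < j then (if j = m then PE 0 else PQ (j + 1))
                              else (if j = 1 then PD 0 else PQ (j - 1)))"
| "pos_pred N m (PQ a) PA = (if a \<le> m + 1 - a then PD N else PE N)"
| "pos_pred N m (PQ a) PF = PE 0"
| "pos_pred N m PA (PD h) = (if h < N then PD (h + 1) else PA)"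
| "pos_pred N m PA (PE h) = (if h < N then PE (h + 1) else PA)"
| "pos_pred N m PA (PQ j) = (if j \<le> m + 1 - j then (if j = 1 then PD 0 else PQ (j - 1))
                              else (if j = m then PE 0 else PQ (j + 1)))"
| "pos_pred N m PA PF = PE 0"
| "pos_pred N m PF (PD h) = (if 0 < h then PD (h - 1) else PE 0)"
| "pos_pred N m PF (PE h) = (if 0 < h then PE (h - 1) else PF)"
| "pos_pred N m PF (PQ j) = (if j + 1 \<le> m + 1 - j then (if j = 1 then PD 0 else PQ (j - 1))
                              else (if j = m then PE 0 else PQ (j + 1)))"
| "pos_pred N m PF PA = PE N"
| "pos_pred N m s y = s"

lemma pos_pred_adj:
  assumes "N \<ge> 2" "m \<ge> 1" "pos_valid N m s" "pos_valid N m y" "y \<noteq> s"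
  shows "pos_adj N m (pos_pred N m s y) y \<and> pos_valid N m (pos_pred N m s y)"
  using assms by (cases s; cases y) (auto simp: pos_adj_def pos_edge.simps)

lemma pos_dist_pred:
  assumes "N \<ge> 2" "m \<ge> 1" "pos_valid N m s" "pos_valid N m y" "y \<noteq> s"
  shows "pos_dist N m s (pos_pred N m s y) + 1 = pos_dist N m s y"
proof (cases s)
  case (PQ a)
  show ?thesis
  proof (cases y)
    case (PQ j)
    then consider "a < j" | "j < a" using assms(5) \<open>s = PQ a\<close> by fastforce
    then show ?thesis
    proof cases
      case 1
      then obtain d where "j = a + d" "0 < d" using less_imp_add_positive by blast
      then show ?thesis using PQ \<open>s = PQ a\<close> assms
        by (cases "d \<le> m + 2 - d"; cases "j = m") (auto simp: min_def)
    next
      case 2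
      then obtain d where "a = j + d" "0 < d" using less_imp_add_positive by blast
      then show ?thesis using PQ \<open>s = PQ a\<close> assms
        by (cases "d \<le> m + 2 - d"; cases "j = 1") (auto simp: min_def)
    qed
  qed (use assms PQ in \<open>auto simp: min_def\<close>)
qed (use assms in \<open>cases y; auto simp: min_def\<close>)+

fun pos_of :: "nat \<Rightarrow> vtx \<Rightarrow> pos" where
  "pos_of n VA = PA"
| "pos_of n VB = PD (n + 1)"
| "pos_of n VC = PE (n + 1)"
| "pos_of n VD = PD 0"
| "pos_of n VE = PE 0"
| "pos_of n VF = PF"
| "pos_of n (P1 i) = PD (n + 1 - i)"
| "pos_of n (P2 i) = PE (n + 1 - i)"
| "pos_of n (P3 j) = PQ j"

fun vtx_of :: "nat \<Rightarrow> pos \<Rightarrow> vtx" where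
  "vtx_of n (PD h) = (if h = 0 then VD else if h = n + 1 then VB else P1 (n + 1 - h))"
| "vtx_of n (PE h) = (if h = 0 then VE else if h = n + 1 then VC else P2 (n + 1 - h))"
| "vtx_of n (PQ j) = P3 j"
| "vtx_of n PA = VA"
| "vtx_of n PF = VF"

lemma mem_G4_verts [simp]:
  "VA \<in> G4_verts n m" "VB \<in> G4_verts n m" "VC \<in> G4_verts n m"
  "VD \<in> G4_verts n m" "VE \<in> G4_verts n m" "VF \<in> G4_verts n m"
  "P1 i \<in> G4_verts n m \<longleftrightarrow> 1 \<le> i \<and> i \<le> n"
  "P2 i \<in> G4_verts n m \<longleftrightarrow> 1 \<le> i \<and> i \<le> n"
  "P3 i \<in> G4_verts n m \<longleftrightarrow> 1 \<le> i \<and> i \<le> m"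
  by (auto simp: G4_verts_def)

lemma pos_valid_pos_of: "v \<in> G4_verts n m \<Longrightarrow> pos_valid (n + 1) m (pos_of n v)"
  by (cases v) auto

lemma vtx_of_pos_of: "v \<in> G4_verts n m \<Longrightarrow> vtx_of n (pos_of n v) = v"
  by (cases v) auto

lemma pos_of_vtx_of: "pos_valid (n + 1) m p \<Longrightarrow> vtx_of n p \<in> G4_verts n m \<and> pos_of n (vtx_of n p) = p"
  by (cases p) auto

lemma G4_adj_imp_pos_adj:
  assumes "n \<ge> 1" "x \<in> G4_verts n m" "y \<in> G4_verts n m" "G4_adj n m x y"
  shows "pos_adj (n + 1) m (pos_of n x) (pos_of n y)"
  using assms unfolding G4_adj_def G4_dir_edge_def path_edge_def pos_adj_def pos_edge.simps
  by (elim disjE exE conjE; simp; (elim disjE exE conjE)?; auto)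

lemma pos_adj_imp_G4_adj:
  assumes "n \<ge> 1" "m \<ge> 1" "pos_valid (n + 1) m p" "pos_valid (n + 1) m q" "pos_adj (n + 1) m p q"
  shows "G4_adj n m (vtx_of n p) (vtx_of n q)"
  using assms unfolding G4_adj_def G4_dir_edge_def path_edge_def pos_adj_def pos_edge.simps
  by (elim disjE exE conjE) auto

lemma gdist_G4:
  assumes "n \<ge> 1" "m \<ge> 1" "u \<in> G4_verts n m" "v \<in> G4_verts n m"
  shows "gdist (G4_verts n m) (G4_adj n m) u v = pos_dist (n + 1) m (pos_of n u) (pos_of n v)"
proof (rule gdist_eq_potential[where D = "\<lambda>v. pos_dist (n + 1) m (pos_of n u) (pos_of n v)"])
  have N: "n + 1 \<ge> 2" using assms(1) by simp
  have u: "pos_valid (n + 1) m (pos_of n u)" using pos_valid_pos_of assms(3) .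
  show "u \<in> G4_verts n m" "v \<in> G4_verts n m" by fact+
  show "pos_dist (n + 1) m (pos_of n u) (pos_of n u) = 0" by simp
  show "pos_dist (n + 1) m (pos_of n u) (pos_of n y) \<le> pos_dist (n + 1) m (pos_of n u) (pos_of n x) + 1"
    if "x \<in> G4_verts n m" "y \<in> G4_verts n m" "G4_adj n m x y" for x y
    using G4_adj_imp_pos_adj[OF assms(1) that] pos_dist_edge[OF u] unfolding pos_adj_def by blast
  show "\<exists>w\<in>G4_verts n m. G4_adj n m w y \<and>
      pos_dist (n + 1) m (pos_of n u) (pos_of n w) + 1 = pos_dist (n + 1) m (pos_of n u) (pos_of n y)"
    if "y \<in> G4_verts n m" "y \<noteq> u" for y
  proof -
    have y: "pos_valid (n + 1) m (pos_of n y)" using pos_valid_pos_of that(1) .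
    have "pos_of n y \<noteq> pos_of n u" using vtx_of_pos_of that assms(3) by metis
    with y pos_pred_adj[OF N assms(2) u] pos_dist_pred[OF N assms(2) u]
    obtain z where z: "pos_adj (n + 1) m z (pos_of n y)" "pos_valid (n + 1) m z"
      "pos_dist (n + 1) m (pos_of n u) z + 1 = pos_dist (n + 1) m (pos_of n u) (pos_of n y)"
      by blast
    have "G4_adj n m (vtx_of n z) y"
      using pos_adj_imp_G4_adj[OF assms(1,2) z(2) y z(1)] vtx_of_pos_of[OF that(1)] by simp
    then show ?thesis using z(2,3) pos_of_vtx_of[OF z(2)] by metis
  qed
qed

lemma sum_lessThan_add:
  fixes f :: "nat \<Rightarrow> 'a::comm_monoid_add"
  shows "(\<Sum>q<a + b. f q) = (\<Sum>q<a. f q) + (\<Sum>q<b. f (a + q))"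
  by (induction b) (auto simp: add.assoc)

lemma sum_lessThan_odd: "(\<Sum>q<K. q + (q + 1)) = K * (K :: nat)"
  by (induction K) auto

lemma double_sum_lessThan_Suc: "2 * (\<Sum>q<K. q + 1) = K * (K + 1 :: nat)"
  by (induction K) auto

definition cycle_dist :: "nat \<Rightarrow> nat \<Rightarrow> nat \<Rightarrow> nat" where
  "cycle_dist L p q = min ((p - q) + (q - p)) (L - ((p - q) + (q - p)))"

lemma sum_cycle_dist_0: "(\<Sum>q<2 * K. cycle_dist (2 * K) 0 q) = K * K"
proof -
  have "(\<Sum>q<2 * K. cycle_dist (2 * K) 0 q) = (\<Sum>q<K. q) + (\<Sum>q<K. K - q)"
    unfolding mult_2 sum_lessThan_add by (simp add: cycle_dist_def)
  also have "(\<Sum>q<K. K - q) = (\<Sum>q<K. q + 1)"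
    using sum.nat_diff_reindex[of "\<lambda>q. q + 1" K] by (simp add: Suc_diff_Suc)
  also have "(\<Sum>q<K. q) + (\<Sum>q<K. q + 1) = (\<Sum>q<K. q + (q + 1))"
    by (simp only: sum.distrib)
  finally show ?thesis by (simp only: sum_lessThan_odd)
qed

lemma sum_cycle_dist_Suc:
  assumes "Suc p < L"
  shows "(\<Sum>q<L. cycle_dist L (Suc p) q) = (\<Sum>q<L. cycle_dist L p q)"
proof -
  obtain L' where L: "L = Suc L'" using assms by (cases L) auto
  have "(\<Sum>q<L. cycle_dist L (Suc p) q) = cycle_dist L (Suc p) 0 + (\<Sum>q<L'. cycle_dist L p q)"
    unfolding L sum.lessThan_Suc_shift by (simp add: cycle_dist_def)
  also have "cycle_dist L (Suc p) 0 = cycle_dist L p L'"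
    using assms L by (auto simp: cycle_dist_def min_def)
  finally show ?thesis unfolding L by simp
qed

lemma sum_cycle_dist:
  assumes "p < 2 * K"
  shows "(\<Sum>q<2 * K. cycle_dist (2 * K) p q) = K * K"
  using assms
proof (induction p)
  case 0
  show ?case by (rule sum_cycle_dist_0)
next
  case (Suc p)
  then show ?case using sum_cycle_dist_Suc[OF Suc.prems] by simp
qed

lemma sum_cycle_dist_interior:
  assumes "p \<le> 2 * t + 1"
  shows "cycle_dist (2 * t + 2) p 0 + (\<Sum>q=1..2 * t. cycle_dist (2 * t + 2) p q)
           + cycle_dist (2 * t + 2) p (2 * t + 1) = (t + 1) * (t + 1)"
proof -
  let ?f = "cycle_dist (2 * t + 2) p"
  have "(\<Sum>q<Suc (2 * t + 1). ?f q) = ?f 0 + (\<Sum>q<2 * t + 1. ?f (Suc q))"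
    by (rule sum.lessThan_Suc_shift)
  also have "(\<Sum>q<2 * t + 1. ?f (Suc q)) = (\<Sum>q=1..2 * t. ?f q) + ?f (2 * t + 1)"
    unfolding One_nat_def sum.atLeast1_atMost_eq by simp
  finally show ?thesis using sum_cycle_dist[of p "t + 1"] assms by (simp add: add.assoc)
qed

lemma sum_tent: "(\<Sum>j=1..2 * t. min j (2 * t + 1 - j)) = t * (t + 1 :: nat)"
proof -
  have "(\<Sum>j=1..2 * t. min j (2 * t + 1 - j)) = (\<Sum>q<t. q + 1) + (\<Sum>q<t. t - q)"
    unfolding One_nat_def sum.atLeast1_atMost_eq mult_2 sum_lessThan_add by simp
  also have "(\<Sum>q<t. t - q) = (\<Sum>q<t. q + 1)"
    using sum.nat_diff_reindex[of "\<lambda>q. q + 1" t] by (simp add: Suc_diff_Suc)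
  finally show ?thesis using double_sum_lessThan_Suc[of t] by simp
qed

definition pos_trans :: "nat \<Rightarrow> nat \<Rightarrow> pos \<Rightarrow> nat" where
  "pos_trans N m s = pos_dist N m s PA + pos_dist N m s PF + (\<Sum>h\<le>N. pos_dist N m s (PD h))
     + (\<Sum>h\<le>N. pos_dist N m s (PE h)) + (\<Sum>j=1..m. pos_dist N m s (PQ j))"

lemma sum_G4_verts:
  "(\<Sum>v\<in>G4_verts n m. g v) = g VA + g VB + g VC + g VD + g VE + g VF
     + (\<Sum>i=1..n. g (P1 i)) + (\<Sum>i=1..n. g (P2 i)) + (\<Sum>j=1..m. g (P3 j))"
proof -
  have V: "G4_verts n m = {VA, VB, VC, VD, VE, VF} \<union> (P1 ` {1..n} \<union> (P2 ` {1..n} \<union> P3 ` {1..m}))"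
    unfolding G4_verts_def by auto
  have "(\<Sum>v\<in>G4_verts n m. g v) = (\<Sum>v\<in>{VA, VB, VC, VD, VE, VF}. g v) + ((\<Sum>v\<in>P1 ` {1..n}. g v)
     + ((\<Sum>v\<in>P2 ` {1..n}. g v) + (\<Sum>v\<in>P3 ` {1..m}. g v)))"
    unfolding V by (subst sum.union_disjoint; (subst sum.union_disjoint)?; (subst sum.union_disjoint)?; auto)
  then show ?thesis by (simp add: sum.reindex inj_on_def add.assoc)
qed

lemma sum_path_coordinates:
  fixes f :: "nat \<Rightarrow> nat"
  shows "f (n + 1) + f 0 + (\<Sum>i=1..n. f (n + 1 - i)) = (\<Sum>h\<le>n + 1. f h)"
proof -
  have "(\<Sum>i=1..n. f (n + 1 - i)) = (\<Sum>h=1..n. f h)"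
    using sum.atLeastAtMost_rev[of "\<lambda>i. f (n + 1 - i)" 1 n] by (simp add: Suc_diff_le)
  then show ?thesis
    by (simp add: atMost_atLeast0 sum.atLeast0_atMost_Suc sum.atLeast_Suc_atMost[of 0 n])
qed

lemma transmission_G4:
  assumes "n \<ge> 1" "m \<ge> 1" "u \<in> G4_verts n m"
  shows "transmission (G4_verts n m) (G4_adj n m) u = pos_trans (n + 1) m (pos_of n u)"
proof -
  define f where "f = pos_dist (n + 1) m (pos_of n u)"
  have "transmission (G4_verts n m) (G4_adj n m) u = (\<Sum>v\<in>G4_verts n m. f (pos_of n v))"
    unfolding transmission_def f_def by (rule sum.cong) (use gdist_G4 assms in auto)
  also have "\<dots> = f PA + f PF + (f (PD (n + 1)) + f (PD 0) + (\<Sum>i=1..n. f (PD (n + 1 - i))))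
     + (f (PE (n + 1)) + f (PE 0) + (\<Sum>i=1..n. f (PE (n + 1 - i)))) + (\<Sum>j=1..m. f (PQ j))"
    unfolding sum_G4_verts by simp
  also have "\<dots> = pos_trans (n + 1) m (pos_of n u)"
    using sum_path_coordinates[of "\<lambda>h. f (PD h)" n] sum_path_coordinates[of "\<lambda>h. f (PE h)" n]
    unfolding pos_trans_def f_def by linarith
  finally show ?thesis .
qed

lemma double_sum_atMost: "2 * (\<Sum>h\<le>N. h) = N * (N + 1 :: nat)"
  using double_gauss_sum[of N, where 'a = nat] by (simp add: atLeast0AtMost)

lemma sum_dist_PD_cycle:
  assumes "h0 \<le> N"
  shows "(\<Sum>h\<le>N. pos_dist N m (PD h0) (PD h)) + (\<Sum>h\<le>N. pos_dist N m (PD h0) (PE h))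
    = (N + 1) * (N + 1)"
proof -
  let ?c = "cycle_dist (2 * (N + 1)) (N - h0)"
  have "(\<Sum>q<N + 1. ?c q) = (\<Sum>q<N + 1. ?c (N - q))"
    using sum.nat_diff_reindex[of ?c "N + 1"] by simp
  also have "\<dots> = (\<Sum>h\<le>N. pos_dist N m (PD h0) (PD h))"
    unfolding lessThan_Suc_atMost[symmetric]
    by (rule sum.cong) (use assms in \<open>auto simp: cycle_dist_def\<close>)
  finally have "(\<Sum>q<N + 1. ?c q) = (\<Sum>h\<le>N. pos_dist N m (PD h0) (PD h))" .
  moreover have "(\<Sum>q<N + 1. ?c (N + 1 + q)) = (\<Sum>h\<le>N. pos_dist N m (PD h0) (PE h))"
    unfolding lessThan_Suc_atMost[symmetric]
    by (rule sum.cong) (use assms in \<open>auto simp: cycle_dist_def min_def\<close>)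
  moreover have "(\<Sum>q<2 * (N + 1). ?c q) = (\<Sum>q<N + 1. ?c q) + (\<Sum>q<N + 1. ?c (N + 1 + q))"
    unfolding mult_2 by (rule sum_lessThan_add)
  ultimately show ?thesis using sum_cycle_dist[of "N - h0" "N + 1"] by simp
qed

lemma sum_dist_PD_PQ:
  "(\<Sum>j=1..2 * t. pos_dist N (2 * t) (PD h) (PQ j)) = 2 * t * h + (t * t + 2 * t)"
proof -
  have "(\<Sum>j=1..2 * t. pos_dist N (2 * t) (PD h) (PQ j))
      = (\<Sum>j=1..2 * t. h + cycle_dist (2 * t + 2) 0 j)"
    by (rule sum.cong) (auto simp: cycle_dist_def)
  also have "\<dots> = 2 * t * h + (\<Sum>j=1..2 * t. cycle_dist (2 * t + 2) 0 j)"
    by (simp add: sum.distrib)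
  also have "(\<Sum>j=1..2 * t. cycle_dist (2 * t + 2) 0 j) = t * t + 2 * t"
    using sum_cycle_dist_interior[of 0 t] by (simp add: cycle_dist_def)
  finally show ?thesis .
qed

lemma sum_dist_PE_PQ:
  "(\<Sum>j=1..2 * t. pos_dist N (2 * t) (PE h) (PQ j)) = 2 * t * h + (t * t + 2 * t)"
proof -
  have "(\<Sum>j=1..2 * t. pos_dist N (2 * t) (PE h) (PQ j))
      = (\<Sum>j=1..2 * t. h + cycle_dist (2 * t + 2) (2 * t + 1) j)"
    by (rule sum.cong) (auto simp: cycle_dist_def min_def)
  also have "\<dots> = 2 * t * h + (\<Sum>j=1..2 * t. cycle_dist (2 * t + 2) (2 * t + 1) j)"
    by (simp add: sum.distrib)
  also have "(\<Sum>j=1..2 * t. cycle_dist (2 * t + 2) (2 * t + 1) j) = t * t + 2 * t"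
    using sum_cycle_dist_interior[of "2 * t + 1" t] by (simp add: cycle_dist_def)
  finally show ?thesis .
qed

lemma sum_dist_PF_PQ:
  "(\<Sum>j=1..2 * t. pos_dist N (2 * t) PF (PQ j)) = 2 * t + (t * t + 2 * t)"
proof -
  have "(\<Sum>j=1..2 * t. pos_dist N (2 * t) PF (PQ j))
      = (\<Sum>j=1..2 * t. 1 + cycle_dist (2 * t + 2) (2 * t + 1) j)"
    by (rule sum.cong) (auto simp: cycle_dist_def min_def)
  also have "\<dots> = 2 * t + (\<Sum>j=1..2 * t. cycle_dist (2 * t + 2) (2 * t + 1) j)"
    by (simp only: sum.distrib) simp
  also have "(\<Sum>j=1..2 * t. cycle_dist (2 * t + 2) (2 * t + 1) j) = t * t + 2 * t"
    using sum_cycle_dist_interior[of "2 * t + 1" t] by (simp add: cycle_dist_def)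
  finally show ?thesis .
qed

lemma sum_dist_PA_PQ:
  "(\<Sum>j=1..2 * t. pos_dist N (2 * t) PA (PQ j)) = 2 * t * (N + 1) + t * (t + 1)"
proof -
  have "(\<Sum>j=1..2 * t. pos_dist N (2 * t) PA (PQ j)) = (\<Sum>j=1..2 * t. (N + 1) + min j (2 * t + 1 - j))"
    by simp
  also have "\<dots> = 2 * t * (N + 1) + (\<Sum>j=1..2 * t. min j (2 * t + 1 - j))"
    by (simp only: sum.distrib) simp
  finally show ?thesis by (simp only: sum_tent)
qed

lemma sum_dist_PQ_PQ:
  assumes "1 \<le> j" "j \<le> 2 * t"
  shows "(\<Sum>q=1..2 * t. pos_dist N (2 * t) (PQ j) (PQ q))
    + min j (2 * t + 2 - j) + min (j + 1) (2 * t + 1 - j) = (t + 1) * (t + 1)"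
proof -
  have "(\<Sum>q=1..2 * t. pos_dist N (2 * t) (PQ j) (PQ q)) = (\<Sum>q=1..2 * t. cycle_dist (2 * t + 2) j q)"
    by (rule sum.cong) (auto simp: cycle_dist_def)
  moreover have "cycle_dist (2 * t + 2) j 0 = min j (2 * t + 2 - j)"
    "cycle_dist (2 * t + 2) j (2 * t + 1) = min (j + 1) (2 * t + 1 - j)"
    using assms by (auto simp: cycle_dist_def min_def)
  moreover note sum_cycle_dist_interior[of j t]
  ultimately show ?thesis using assms by linarith
qed

definition trans_base :: "nat \<Rightarrow> nat \<Rightarrow> nat" where
  "trans_base N t = (N + 1) * (N + 1) + t * t + 2 * t + N + 3"

lemma pos_trans_PD:
  assumes "h \<le> N"
  shows "pos_trans N (2 * t) (PD h) = trans_base N t + 2 * t * h"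
  using assms sum_dist_PD_cycle[OF assms, where m = "2 * t"] sum_dist_PD_PQ[where t = t and N = N and h = h]
  unfolding pos_trans_def trans_base_def by simp

lemma pos_trans_PE:
  assumes "h \<le> N"
  shows "pos_trans N (2 * t) (PE h) + 1 = trans_base N t + 2 * t * h"
proof -
  have "(\<Sum>k\<le>N. pos_dist N (2 * t) (PE h) (PD k)) = (\<Sum>k\<le>N. pos_dist N (2 * t) (PD h) (PE k))"
    "(\<Sum>k\<le>N. pos_dist N (2 * t) (PE h) (PE k)) = (\<Sum>k\<le>N. pos_dist N (2 * t) (PD h) (PD k))"
    by (auto intro: sum.cong)
  then show ?thesis
    using assms sum_dist_PD_cycle[OF assms, where m = "2 * t"] sum_dist_PE_PQ[where t = t and N = N and h = h]
    unfolding pos_trans_def trans_base_def by simp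
qed

lemma sum_dist_PQ_path:
  "(\<Sum>h\<le>N. pos_dist N m (PQ j) (PD h)) + (\<Sum>h\<le>N. pos_dist N m (PQ j) (PE h))
     = 2 * (\<Sum>h\<le>N. h) + (N + 1) * (min j (m + 2 - j) + min (j + 1) (m + 1 - j))"
  by (simp add: sum.distrib algebra_simps)

definition q_depth :: "nat \<Rightarrow> nat \<Rightarrow> nat" where
  "q_depth t j = (if j \<le> t then j else 2 * t + 1 - j)"

lemma q_depth_bounds: "1 \<le> j \<Longrightarrow> j \<le> 2 * t \<Longrightarrow> 1 \<le> q_depth t j \<and> q_depth t j \<le> t"
  by (auto simp: q_depth_def)

lemma q_depth_inj:
  "1 \<le> j \<Longrightarrow> j \<le> 2 * t \<Longrightarrow> 1 \<le> j' \<Longrightarrow> j' \<le> 2 * t \<Longrightarrow> (t < j \<longleftrightarrow> t < j')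
    \<Longrightarrow> q_depth t j = q_depth t j' \<Longrightarrow> j = j'"
  by (auto simp: q_depth_def split: if_splits)

lemma pos_trans_PQ:
  assumes "1 \<le> j" "j \<le> 2 * t"
  shows "pos_trans N (2 * t) (PQ j) + of_bool (t < j)
    = trans_base N t + 2 * (N + 1) * q_depth t j"
proof -
  define \<alpha> where "\<alpha> = min j (2 * t + 2 - j)"
  define \<beta> where "\<beta> = min (j + 1) (2 * t + 1 - j)"
  define \<gamma> where "\<gamma> = min j (2 * t + 1 - j)"
  have "pos_trans N (2 * t) (PQ j) + \<alpha> + \<beta>
     = N * (N + 1) + (N + 1) * (\<alpha> + \<beta>) + (N + 1 + \<gamma>) + (1 + \<beta>) + (t + 1) * (t + 1)"
  proof -
    have "pos_dist N (2 * t) (PQ j) PA = N + 1 + \<gamma>" "pos_dist N (2 * t) (PQ j) PF = 1 + \<beta>"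
      unfolding \<beta>_def \<gamma>_def by simp_all
    then show ?thesis
      using sum_dist_PQ_path[where N = N and m = "2 * t" and j = j] double_sum_atMost[of N]
        sum_dist_PQ_PQ[OF assms, where N = N]
      unfolding pos_trans_def \<alpha>_def \<beta>_def \<gamma>_def by linarith
  qed
  note eq = this
  show ?thesis
  proof (cases "j \<le> t")
    case True
    then have "\<alpha> = j" "\<beta> = j + 1" "\<gamma> = j" unfolding \<alpha>_def \<beta>_def \<gamma>_def by auto
    with eq True show ?thesis by (simp add: q_depth_def trans_base_def algebra_simps)
  next
    case False
    define k where "k = q_depth t j"
    have "\<alpha> = k + 1" "\<beta> = k" "\<gamma> = k"
      unfolding \<alpha>_def \<beta>_def \<gamma>_def k_def q_depth_def using False assms by auto
    with eq False show ?thesis by (simp add: trans_base_def algebra_simps flip: k_def)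
  qed
qed

lemma pos_trans_PA: "pos_trans N (2 * t) PA = trans_base N t + N + t + 2 * t * N"
proof -
  have "(\<Sum>h\<le>N. pos_dist N (2 * t) PA (PD h)) = (\<Sum>h\<le>N. h + 1)"
    using sum.atLeastAtMost_rev[of "\<lambda>h. h + 1" 0 N] by (simp add: atMost_atLeast0 Suc_diff_le)
  also have "\<dots> = (\<Sum>h\<le>N. h) + (N + 1)" by (simp only: sum.distrib) simp
  finally have "(\<Sum>h\<le>N. pos_dist N (2 * t) PA (PD h)) = (\<Sum>h\<le>N. h) + (N + 1)" .
  moreover have "(\<Sum>h\<le>N. pos_dist N (2 * t) PA (PE h)) = (\<Sum>h\<le>N. pos_dist N (2 * t) PA (PD h))"
    by simp
  ultimately show ?thesis
    using double_sum_atMost[of N] sum_dist_PA_PQ[where N = N and t = t]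
    unfolding pos_trans_def trans_base_def by (simp add: algebra_simps)
qed

lemma pos_trans_PF: "pos_trans N (2 * t) PF + 1 = trans_base N t + 2 * (N + 1) + 2 * t"
proof -
  have "(\<Sum>h\<le>N. pos_dist N (2 * t) PF (PD h)) = (\<Sum>h\<le>N. h) + 2 * (N + 1)"
    "(\<Sum>h\<le>N. pos_dist N (2 * t) PF (PE h)) = (\<Sum>h\<le>N. h) + (N + 1)"
    by (simp only: pos_dist.simps sum.distrib; simp)+
  then show ?thesis
    using double_sum_atMost[of N] sum_dist_PF_PQ[where N = N and t = t]
    unfolding pos_trans_def trans_base_def by (simp add: algebra_simps)
qed

fun on_e_side :: "nat \<Rightarrow> pos \<Rightarrow> bool" where
  "on_e_side t (PD h) \<longleftrightarrow> False"
| "on_e_side t (PE h) \<longleftrightarrow> True"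
| "on_e_side t (PQ j) \<longleftrightarrow> t < j"
| "on_e_side t PA \<longleftrightarrow> False"
| "on_e_side t PF \<longleftrightarrow> True"

fun pos_excess :: "nat \<Rightarrow> nat \<Rightarrow> pos \<Rightarrow> nat" where
  "pos_excess N t (PD h) = 2 * t * h"
| "pos_excess N t (PE h) = 2 * t * h"
| "pos_excess N t (PQ j) = 2 * (N + 1) * q_depth t j"
| "pos_excess N t PA = N + t + 2 * t * N"
| "pos_excess N t PF = 2 * (N + 1) + 2 * t"

lemma pos_trans_eq_excess:
  assumes "pos_valid N (2 * t) x"
  shows "pos_trans N (2 * t) x + of_bool (on_e_side t x) = trans_base N t + pos_excess N t x"
  using assms pos_trans_PD pos_trans_PE pos_trans_PQ pos_trans_PA pos_trans_PF by (cases x) auto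

lemma even_pos_excess: "even N \<Longrightarrow> even t \<Longrightarrow> even (pos_excess N t x)"
  by (cases x) auto

lemma coprime_mult_neq:
  fixes t M h k :: nat
  assumes "coprime t M" "0 < k" "h < M"
  shows "t * h \<noteq> M * k"
proof
  assume eq: "t * h = M * k"
  then have "t dvd k" using assms(1) by (metis coprime_dvd_mult_right_iff dvd_triv_left)
  then have "t \<le> k" using assms(2) by (simp add: dvd_imp_le)
  moreover have "t > 0" using eq assms(2,3) by (cases "t = 0") auto
  then have "t * h < M * t" using assms(3) by simp
  ultimately show False using eq mult_le_mono2[of t k M] by simp
qed

lemma cycle_excess_neq_PA:
  fixes N t k :: nat
  assumes "\<not> (N + 1) dvd (2 * t + 2)"
  shows "2 * (N + 1) * k \<noteq> N + t + 2 * t * N"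
proof
  assume "2 * (N + 1) * k = N + t + 2 * t * N"
  then have "(N + 1) * (2 * k) + (t + 1) = (N + 1) * (2 * t + 1)" by (simp add: algebra_simps)
  then have "(N + 1) dvd (t + 1)" by (metis dvd_add_right_iff dvd_triv_left)
  then have "(N + 1) dvd (2 * t + 2)" by (metis dvd_mult add_mult_distrib2 mult_1_right)
  with assms show False ..
qed

lemma path_excess_neq_PF:
  fixes N t h :: nat
  assumes "even N" "even t"
  shows "2 * t * h \<noteq> 2 * (N + 1) + 2 * t"
proof
  assume "2 * t * h = 2 * (N + 1) + 2 * t"
  then have "t * h = (N + 1) + t" by simp
  with assms show False by (metis even_add even_mult_iff odd_one)
qed

lemma cycle_excess_neq_PF:
  fixes N t k :: nat
  assumes "coprime t (N + 1)" "N \<ge> 1"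
  shows "2 * (N + 1) * k \<noteq> 2 * (N + 1) + 2 * t"
proof
  assume "2 * (N + 1) * k = 2 * (N + 1) + 2 * t"
  then have "(N + 1) * k = (N + 1) + t" by simp
  then have "(N + 1) dvd (N + 1) + t" by (metis dvd_triv_left)
  then have "(N + 1) dvd t" using dvd_add_right_iff[OF dvd_refl[of "N + 1"]] by blast
  then have "N + 1 = 1" using coprime_common_divisor_nat[OF assms(1) _ dvd_refl] by blast
  with assms(2) show False by simp
qed

lemma pos_excess_inj:
  fixes N t :: nat
  assumes t: "t > 0" "even t" and N: "even N" "N \<ge> 1"
    and cop: "coprime t (N + 1)" and not_dvd: "\<not> (N + 1) dvd (2 * t + 2)"
    and "pos_valid N (2 * t) x" "pos_valid N (2 * t) y"
    and "on_e_side t x = on_e_side t y" "pos_excess N t x = pos_excess N t y"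
  shows "x = y"
proof -
  have PD_PQ: "2 * t * h \<noteq> 2 * (N + 1) * k" if "h \<le> N" "1 \<le> k" for h k
    using coprime_mult_neq[OF cop, of k h] that by simp
  have PD_PA: "2 * t * h \<noteq> N + t + 2 * t * N" if "h \<le> N" for h
  proof -
    have "t * h \<le> t * N" using that by simp
    then show ?thesis using t(1) by linarith
  qed
  have PQ_PA: "2 * (N + 1) * k \<noteq> N + t + 2 * t * N" for k
    using cycle_excess_neq_PA[OF not_dvd] .
  have PD_PF: "2 * t * h \<noteq> 2 * (N + 1) + 2 * t" for h
    using path_excess_neq_PF[OF N(1) t(2)] .
  have PQ_PF: "2 * (N + 1) * k \<noteq> 2 * (N + 1) + 2 * t" for k
    using cycle_excess_neq_PF[OF cop N(2)] .
  have path_inj: "h = h'" if "2 * t * h = 2 * t * h'" for h h'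
    using that t(1) by simp
  have cycle_inj: "k = k'" if "2 * (N + 1) * k = 2 * (N + 1) * k'" for k k'
    using that mult_left_cancel[of "2 * (N + 1)" k k'] by simp
  show ?thesis
    using assms(7-10)
    by (cases x; cases y; simp only: pos_excess.simps on_e_side.simps pos_valid.simps
        pos.inject pos.distinct simp_thms;
        metis PD_PQ PD_PA PQ_PA PD_PF PQ_PF path_inj cycle_inj q_depth_bounds q_depth_inj)
qed

lemma pos_trans_inj:
  fixes N t :: nat
  assumes "t > 0" "even t" "even N" "N \<ge> 1" "coprime t (N + 1)" "\<not> (N + 1) dvd (2 * t + 2)"
    and x: "pos_valid N (2 * t) x" and y: "pos_valid N (2 * t) y"
    and eq: "pos_trans N (2 * t) x = pos_trans N (2 * t) y"
  shows "x = y"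
proof -
  have "even (pos_excess N t x)" "even (pos_excess N t y)"
    using even_pos_excess assms(2,3) by auto
  moreover note pos_trans_eq_excess[OF x] pos_trans_eq_excess[OF y]
  \<comment> \<open>the excesses are even, so the parity of the transmission tells the side\<close>
  ultimately have "on_e_side t x = on_e_side t y" "pos_excess N t x = pos_excess N t y"
    using eq by (cases "on_e_side t x"; cases "on_e_side t y"; simp; presburger)+
  then show ?thesis using pos_excess_inj[OF assms(1-6) x y] by blast
qed

lemma power_of_two_ge_4:
  fixes m :: nat
  assumes "m = 2 ^ k" "m \<ge> 4"
  obtains a where "a \<ge> 1" "m = 2 * 2 ^ a"
proof -
  have "k \<ge> 2"
  proof (rule ccontr)
    assume "\<not> k \<ge> 2"
    then have "m \<le> 2 ^ 1" unfolding assms(1) by (intro power_increasing) auto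
    with assms(2) show False by simp
  qed
  then show ?thesis using that[of "k - 1"] assms(1) by (cases k) auto
qed

theorem proposition4:
  fixes n m :: nat
  assumes "\<exists>k. m = 2 ^ k" and "m \<ge> 4"
    and "odd n" and "n \<ge> 1"
    and "\<not> (n + 2) dvd (m + 2)"
  shows "transmission_irregular (G4_verts n m) (G4_adj n m)"
proof -
  obtain a where a: "a \<ge> 1" "m = 2 * 2 ^ a" using assms(1,2) power_of_two_ge_4 by blast
  define t :: nat where "t = 2 ^ a"
  have t: "t > 0" "even t" "coprime t (n + 1 + 1)" "\<not> (n + 1 + 1) dvd (2 * t + 2)"
    using a assms(3,5) unfolding t_def by (auto simp: add.assoc)
  show ?thesis
    unfolding transmission_irregular_def
  proof (rule inj_onI)
    fix u v
    assume u: "u \<in> G4_verts n m" and v: "v \<in> G4_verts n m"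
      and "transmission (G4_verts n m) (G4_adj n m) u = transmission (G4_verts n m) (G4_adj n m) v"
    then have "pos_trans (n + 1) (2 * t) (pos_of n u) = pos_trans (n + 1) (2 * t) (pos_of n v)"
      using transmission_G4 assms(2,4) a(2) t_def by simp
    then have "pos_of n u = pos_of n v"
      using pos_trans_inj[OF t(1,2) _ _ t(3,4)] pos_valid_pos_of[OF u] pos_valid_pos_of[OF v]
        assms(3,4) a(2) t_def by simp
    then show "u = v" using vtx_of_pos_of u v by metis
  qed
qed

end
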